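(* Let $0<\alpha<1$ and $\beta=\alpha$. Then the essential norm of the $\beta$-Ces\`aro operator $C_\alpha:\mathcal{B}_\alpha^0\to\mathcal{B}_\alpha^0$ is $0$.
   Context: $\mathbb{D}=\{z\in\mathbb{C}:|z|<1\}$. For $\alpha>0$, the $\alpha$-Bloch space $\mathcal{B}_\alpha$ is the space of analytic functions $f$ on $\mathbb{D}$ with $\|f\|_{\mathcal{B}_\alpha}:=\sup_{z\in\mathbb{D}}(1-|z|^2)^\alpha|f'(z)|<\infty$. $\mathcal{B}_\alpha^0=\{f\in\mathcal{B}_\alpha: f(0)=0\}$, normed by $\|\cdot\|_{\mathcal{B}_\alpha}$. For $\beta\in\mathbb{R}$, $C_\beta(f)(z)=\int_0^z \frac{f(w)}{w(1-w)^\beta}\,dw$ (principal branch). The essential norm of a bounded operator $T:X\to Y$ between Banach spaces is $\|T\|_e=\inf\{\|T+K\|: K:X\to Y \text{ compact}\}$. *)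

theory Defs
  imports "HOL-Complex_Analysis.Complex_Analysis"
begin

definition bloch_norm :: "real \<Rightarrow> (complex \<Rightarrow> complex) \<Rightarrow> real" where
  "bloch_norm \<alpha> f = (SUP z\<in>ball 0 1. (1 - (cmod z)\<^sup>2) powr \<alpha> * cmod (deriv f z))"

definition bloch0 :: "real \<Rightarrow> (complex \<Rightarrow> complex) set" where
  "bloch0 \<alpha> = {f. f holomorphic_on ball 0 1 \<and> f 0 = 0 \<and>
      bdd_above ((\<lambda>z. (1 - (cmod z)\<^sup>2) powr \<alpha> * cmod (deriv f z)) ` ball 0 1)}"

definition cesaro :: "real \<Rightarrow> (complex \<Rightarrow> complex) \<Rightarrow> (complex \<Rightarrow> complex)" where
  "cesaro \<beta> f = (\<lambda>z. contour_integral (linepath 0 z)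
      (\<lambda>w. f w / (w * (1 - w) powr (complex_of_real \<beta>))))"

definition bloch_linear :: "real \<Rightarrow> ((complex \<Rightarrow> complex) \<Rightarrow> (complex \<Rightarrow> complex)) \<Rightarrow> bool" where
  "bloch_linear \<alpha> K \<longleftrightarrow>
     (\<forall>f\<in>bloch0 \<alpha>. K f \<in> bloch0 \<alpha>) \<and>
     (\<forall>f\<in>bloch0 \<alpha>. \<forall>g\<in>bloch0 \<alpha>. \<forall>z\<in>ball 0 1. K (\<lambda>w. f w + g w) z = K f z + K g z) \<and>
     (\<forall>f\<in>bloch0 \<alpha>. \<forall>c::complex. \<forall>z\<in>ball 0 1. K (\<lambda>w. c * f w) z = c * K f z)"

definition bloch_compact :: "real \<Rightarrow> ((complex \<Rightarrow> complex) \<Rightarrow> (complex \<Rightarrow> complex)) \<Rightarrow> bool" where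
  "bloch_compact \<alpha> K \<longleftrightarrow> bloch_linear \<alpha> K \<and>
     (\<forall>f :: nat \<Rightarrow> complex \<Rightarrow> complex. \<forall>B.
        (\<forall>n. f n \<in> bloch0 \<alpha> \<and> bloch_norm \<alpha> (f n) \<le> B) \<longrightarrow>
        (\<exists>r g. strict_mono r \<and> g \<in> bloch0 \<alpha> \<and>
           (\<lambda>n. bloch_norm \<alpha> (\<lambda>z. K (f (r n)) z - g z)) \<longlonglongrightarrow> 0))"

definition bloch_opnorm :: "real \<Rightarrow> ((complex \<Rightarrow> complex) \<Rightarrow> (complex \<Rightarrow> complex)) \<Rightarrow> real" where
  "bloch_opnorm \<alpha> T = Sup {bloch_norm \<alpha> (T f) | f. f \<in> bloch0 \<alpha> \<and> bloch_norm \<alpha> f \<le> 1}"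

definition bloch_essnorm :: "real \<Rightarrow> ((complex \<Rightarrow> complex) \<Rightarrow> (complex \<Rightarrow> complex)) \<Rightarrow> real" where
  "bloch_essnorm \<alpha> T = Inf {bloch_opnorm \<alpha> (\<lambda>f z. T f z + K f z) | K. bloch_compact \<alpha> K}"

end

theory Submission
  imports Defs
begin

text \<open>
  For \<open>\<beta> = \<alpha> < 1\<close> the operator \<open>C\<^sub>\<alpha>\<close> is itself compact on \<open>\<B>\<^sub>\<alpha>\<^sup>0\<close>, so
  \<open>K = -C\<^sub>\<alpha>\<close> shows that the essential norm vanishes. Writing \<open>q f (z) = f(z)/z\<close>, one has
  \<open>(C\<^sub>\<alpha> f)'(z) = q f (z) / (1 - z)\<^sup>\<alpha>\<close>, and \<open>(1 - |z|\<^sup>2)\<^sup>\<alpha> \<le> 2 |1 - z|\<^sup>\<alpha>\<close>, hence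
  \<open>\<parallel>C\<^sub>\<alpha> f\<parallel> \<le> 2 sup |q f|\<close>. Since \<open>\<alpha> < 1\<close>, integrating the Bloch bound along rays shows
  that functions of norm \<open>\<le> B\<close> satisfy \<open>|q f| \<le> B/(1 - \<alpha>)\<close> and are uniformly Hoelder:
  \<open>|f(z) - f(\<rho> z)| \<le> B (1 - \<rho>)\<^sup>1\<^sup>-\<^sup>\<alpha> / (1 - \<alpha>)\<close>. For a bounded sequence, Montel's theorem
  yields a subsequence along which \<open>q f\<^sub>n\<close> converges locally uniformly; the uniform Hoelder
  bound controls the annulus near the boundary, so the convergence is uniform on the whole disc,
  and therefore \<open>C\<^sub>\<alpha> f\<^sub>n\<close> converges in \<open>\<B>\<^sub>\<alpha>\<close>.
\<close>

section \<open>Bloch spaces\<close>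

definition bloch :: "real \<Rightarrow> (complex \<Rightarrow> complex) set" where
  "bloch \<alpha> = {f. f holomorphic_on ball 0 1 \<and>
      bdd_above ((\<lambda>z. (1 - (cmod z)\<^sup>2) powr \<alpha> * cmod (deriv f z)) ` ball 0 1)}"

lemma bloch0_eq: "bloch0 \<alpha> = {f \<in> bloch \<alpha>. f 0 = 0}"
  by (auto simp: bloch0_def bloch_def)

lemma bloch_holomorphic: "f \<in> bloch \<alpha> \<Longrightarrow> f holomorphic_on ball 0 1"
  by (simp add: bloch_def)

lemma blochI:
  assumes "f holomorphic_on ball 0 1"
    and "\<And>z. z \<in> ball 0 1 \<Longrightarrow> (1 - (cmod z)\<^sup>2) powr \<alpha> * cmod (deriv f z) \<le> B"
  shows "f \<in> bloch \<alpha>"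
  using assms unfolding bloch_def by (auto intro!: bdd_aboveI2[where M=B])

lemma bloch_norm_upper:
  "f \<in> bloch \<alpha> \<Longrightarrow> z \<in> ball 0 1 \<Longrightarrow> (1 - (cmod z)\<^sup>2) powr \<alpha> * cmod (deriv f z) \<le> bloch_norm \<alpha> f"
  unfolding bloch_def bloch_norm_def by (auto intro: cSUP_upper)

lemma bloch_norm_least:
  "(\<And>z. z \<in> ball 0 1 \<Longrightarrow> (1 - (cmod z)\<^sup>2) powr \<alpha> * cmod (deriv f z) \<le> B) \<Longrightarrow> bloch_norm \<alpha> f \<le> B"
  unfolding bloch_norm_def by (rule cSUP_least) auto

lemma bloch_norm_nonneg: "f \<in> bloch \<alpha> \<Longrightarrow> 0 \<le> bloch_norm \<alpha> f"
  using bloch_norm_upper[of f \<alpha> 0] by (simp add: order_trans[OF norm_ge_zero])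

lemma bloch_norm_cong:
  assumes "\<And>z. z \<in> ball 0 1 \<Longrightarrow> f z = g z"
  shows "bloch_norm \<alpha> f = bloch_norm \<alpha> g"
proof -
  have "deriv f z = deriv g z" if "z \<in> ball 0 1" for z
    using that assms by (intro deriv_cong_ev) (auto simp: eventually_nhds intro!: exI[of _ "ball 0 1"])
  then show ?thesis
    unfolding bloch_norm_def by (intro SUP_cong) auto
qed

lemma bloch_norm_0 [simp]: "bloch_norm \<alpha> (\<lambda>z. 0) = 0"
  by (simp add: bloch_norm_def)

lemma zero_in_bloch0: "(\<lambda>z. 0) \<in> bloch0 \<alpha>"
  by (auto simp: bloch0_eq intro!: blochI[where B=0])

lemma bloch_uminus:
  assumes "f \<in> bloch \<alpha>"
  shows "(\<lambda>z. - f z) \<in> bloch \<alpha>" and "bloch_norm \<alpha> (\<lambda>z. - f z) = bloch_norm \<alpha> f"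
proof -
  have hol: "f holomorphic_on ball 0 1"
    using assms by (rule bloch_holomorphic)
  have deriv_minus: "deriv (\<lambda>w. - f w) z = - deriv f z" if "z \<in> ball 0 1" for z
    using hol that by (intro deriv_minus) (auto intro: holomorphic_on_imp_differentiable_at)
  show "(\<lambda>z. - f z) \<in> bloch \<alpha>"
    using hol bloch_norm_upper[OF assms] deriv_minus
    by (intro blochI[where B="bloch_norm \<alpha> f"] holomorphic_intros) auto
  show "bloch_norm \<alpha> (\<lambda>z. - f z) = bloch_norm \<alpha> f"
    unfolding bloch_norm_def by (intro SUP_cong) (auto simp: deriv_minus)
qed

lemma bloch_diff:
  assumes "f \<in> bloch \<alpha>" "g \<in> bloch \<alpha>"
  shows "(\<lambda>z. f z - g z) \<in> bloch \<alpha>"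
proof (rule blochI)
  have hf: "f holomorphic_on ball 0 1" and hg: "g holomorphic_on ball 0 1"
    using assms by (simp_all add: bloch_holomorphic)
  then show "(\<lambda>z. f z - g z) holomorphic_on ball 0 1"
    by (intro holomorphic_intros)
  fix z :: complex assume z: "z \<in> ball 0 1"
  have "deriv (\<lambda>w. f w - g w) z = deriv f z - deriv g z"
    using hf hg z by (intro deriv_diff) (auto intro: holomorphic_on_imp_differentiable_at)
  then have "(1 - (cmod z)\<^sup>2) powr \<alpha> * cmod (deriv (\<lambda>w. f w - g w) z)
      \<le> (1 - (cmod z)\<^sup>2) powr \<alpha> * cmod (deriv f z) + (1 - (cmod z)\<^sup>2) powr \<alpha> * cmod (deriv g z)"
    by (simp add: distrib_left[symmetric] mult_left_mono norm_triangle_ineq4)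
  also have "\<dots> \<le> bloch_norm \<alpha> f + bloch_norm \<alpha> g"
    using bloch_norm_upper[OF _ z] assms by (intro add_mono)
  finally show "(1 - (cmod z)\<^sup>2) powr \<alpha> * cmod (deriv (\<lambda>w. f w - g w) z)
      \<le> bloch_norm \<alpha> f + bloch_norm \<alpha> g" .
qed

lemma bloch_norm_add_le:
  assumes "f \<in> bloch \<alpha>" "g \<in> bloch \<alpha>"
  shows "bloch_norm \<alpha> (\<lambda>z. f z + g z) \<le> bloch_norm \<alpha> f + bloch_norm \<alpha> g"
proof (rule bloch_norm_least)
  fix z :: complex assume z: "z \<in> ball 0 1"
  have "deriv (\<lambda>w. f w + g w) z = deriv f z + deriv g z"
    using assms z by (intro deriv_add) (auto intro: holomorphic_on_imp_differentiable_at bloch_holomorphic)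
  then have "(1 - (cmod z)\<^sup>2) powr \<alpha> * cmod (deriv (\<lambda>w. f w + g w) z)
      \<le> (1 - (cmod z)\<^sup>2) powr \<alpha> * cmod (deriv f z) + (1 - (cmod z)\<^sup>2) powr \<alpha> * cmod (deriv g z)"
    by (simp add: distrib_left[symmetric] mult_left_mono norm_triangle_ineq)
  also have "\<dots> \<le> bloch_norm \<alpha> f + bloch_norm \<alpha> g"
    using bloch_norm_upper[OF _ z] assms by (intro add_mono)
  finally show "(1 - (cmod z)\<^sup>2) powr \<alpha> * cmod (deriv (\<lambda>w. f w + g w) z)
      \<le> bloch_norm \<alpha> f + bloch_norm \<alpha> g" .
qed

lemma bloch_linear_zero:
  assumes "bloch_linear \<alpha> K" "z \<in> ball 0 1"
  shows "K (\<lambda>w. 0) z = 0"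
proof -
  from assms(1) zero_in_bloch0 have "\<forall>c. \<forall>z\<in>ball 0 1. K (\<lambda>w. c * 0) z = c * K (\<lambda>w. 0) z"
    unfolding bloch_linear_def by (elim conjE bspec[where x="\<lambda>w. 0"])
  with assms(2) show ?thesis
    by (metis mult_zero_left)
qed

section \<open>Compact operators and the essential norm\<close>

lemma bloch_compact_bounded:
  assumes K: "bloch_compact \<alpha> K"
  obtains C where "\<And>f. f \<in> bloch0 \<alpha> \<Longrightarrow> bloch_norm \<alpha> f \<le> 1 \<Longrightarrow> bloch_norm \<alpha> (K f) \<le> C"
proof (rule ccontr)
  assume "\<not> thesis"
  with that have "\<forall>n::nat. \<exists>f. f \<in> bloch0 \<alpha> \<and> bloch_norm \<alpha> f \<le> 1 \<and> real n < bloch_norm \<alpha> (K f)"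
    by (meson not_le)
  then obtain fs where fs: "\<And>n. fs n \<in> bloch0 \<alpha>" "\<And>n. bloch_norm \<alpha> (fs n) \<le> 1"
    and large: "\<And>n. real n < bloch_norm \<alpha> (K (fs n))"
    by metis
  obtain r g where r: "strict_mono r" and g: "g \<in> bloch0 \<alpha>"
    and lim: "(\<lambda>n. bloch_norm \<alpha> (\<lambda>z. K (fs (r n)) z - g z)) \<longlonglongrightarrow> 0"
    using K fs unfolding bloch_compact_def by blast
  obtain N where N: "\<And>n. n \<ge> N \<Longrightarrow> bloch_norm \<alpha> (\<lambda>z. K (fs (r n)) z - g z) < 1"
    using lim[THEN order_tendstoD(2), of 1] by (auto simp: eventually_sequentially)
  define n where "n = max N (nat \<lceil>1 + bloch_norm \<alpha> g\<rceil>)"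
  have Kf: "K (fs (r n)) \<in> bloch \<alpha>" and g': "g \<in> bloch \<alpha>"
    using K fs g by (auto simp: bloch_compact_def bloch_linear_def bloch0_eq)
  have "bloch_norm \<alpha> (K (fs (r n))) = bloch_norm \<alpha> (\<lambda>z. (K (fs (r n)) z - g z) + g z)"
    by simp
  also have "\<dots> \<le> bloch_norm \<alpha> (\<lambda>z. K (fs (r n)) z - g z) + bloch_norm \<alpha> g"
    using Kf g' by (intro bloch_norm_add_le bloch_diff)
  also have "\<dots> < 1 + bloch_norm \<alpha> g"
    using N[of n] by (simp add: n_def)
  also have "\<dots> \<le> real (r n)"
    using seq_suble[OF r, of n] unfolding n_def by linarith
  finally show False
    using large[of "r n"] by simp
qed

text \<open>The bound is needed: \<open>Sup\<close> of a set of reals that is not bounded above is unspecified.\<close>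

lemma bloch_opnorm_nonneg:
  assumes bounded: "\<And>f. f \<in> bloch0 \<alpha> \<Longrightarrow> bloch_norm \<alpha> f \<le> 1 \<Longrightarrow> bloch_norm \<alpha> (T f) \<le> C"
    and zero: "\<And>z. z \<in> ball 0 1 \<Longrightarrow> T (\<lambda>w. 0) z = 0"
  shows "0 \<le> bloch_opnorm \<alpha> T"
  unfolding bloch_opnorm_def
proof (rule cSup_upper)
  show "0 \<in> {bloch_norm \<alpha> (T f) | f. f \<in> bloch0 \<alpha> \<and> bloch_norm \<alpha> f \<le> 1}"
    using bloch_norm_cong[of "T (\<lambda>w. 0)" "\<lambda>w. 0", OF zero] zero_in_bloch0 by fastforce
  show "bdd_above {bloch_norm \<alpha> (T f) | f. f \<in> bloch0 \<alpha> \<and> bloch_norm \<alpha> f \<le> 1}"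
    by (auto intro!: bdd_aboveI[where M=C] bounded)
qed

lemma bloch_compact_uminus:
  assumes K: "bloch_compact \<alpha> K"
  shows "bloch_compact \<alpha> (\<lambda>f z. - K f z)"
  unfolding bloch_compact_def
proof (intro conjI allI impI)
  have lin: "bloch_linear \<alpha> K"
    using K by (simp add: bloch_compact_def)
  then have Kf: "K f \<in> bloch \<alpha>" "K f 0 = 0" if "f \<in> bloch0 \<alpha>" for f
    using that by (simp_all add: bloch_linear_def bloch0_eq)
  show "bloch_linear \<alpha> (\<lambda>f z. - K f z)"
    unfolding bloch_linear_def
  proof (intro conjI ballI allI)
    show "(\<lambda>z. - K f z) \<in> bloch0 \<alpha>" if "f \<in> bloch0 \<alpha>" for f
      using Kf[OF that] bloch_uminus(1) by (simp add: bloch0_eq)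
  qed (use lin in \<open>simp_all add: bloch_linear_def\<close>)
  fix fs :: "nat \<Rightarrow> complex \<Rightarrow> complex" and B
  assume fs: "\<forall>n. fs n \<in> bloch0 \<alpha> \<and> bloch_norm \<alpha> (fs n) \<le> B"
  then obtain r g where r: "strict_mono r" and g: "g \<in> bloch0 \<alpha>"
    and lim: "(\<lambda>n. bloch_norm \<alpha> (\<lambda>z. K (fs (r n)) z - g z)) \<longlonglongrightarrow> 0"
    using K unfolding bloch_compact_def by blast
  have "bloch_norm \<alpha> (\<lambda>z. - K (fs (r n)) z - - g z) = bloch_norm \<alpha> (\<lambda>z. K (fs (r n)) z - g z)" for n
  proof -
    have "(\<lambda>z. K (fs (r n)) z - g z) \<in> bloch \<alpha>"
      using Kf fs g by (intro bloch_diff) (simp_all add: bloch0_eq)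
    from bloch_uminus(2)[OF this] show ?thesis
      by simp
  qed
  moreover have "(\<lambda>z. - g z) \<in> bloch0 \<alpha>"
    using g by (simp add: bloch0_eq bloch_uminus)
  ultimately show "\<exists>r g. strict_mono r \<and> g \<in> bloch0 \<alpha> \<and>
      (\<lambda>n. bloch_norm \<alpha> (\<lambda>z. - K (fs (r n)) z - g z)) \<longlonglongrightarrow> 0"
    using r lim by (intro exI[of _ r] exI[of _ "\<lambda>z. - g z"]) simp
qed

lemma bloch_essnorm_eq_0:
  assumes "bloch_compact \<alpha> (\<lambda>f z. - T f z)"
  shows "bloch_essnorm \<alpha> T = 0"
  unfolding bloch_essnorm_def
proof (rule cInf_eq_minimum)
  have "{bloch_norm \<alpha> (\<lambda>z. T f z + - T f z) | f. f \<in> bloch0 \<alpha> \<and> bloch_norm \<alpha> f \<le> 1} = {0}"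
    using zero_in_bloch0 by fastforce
  then have "bloch_opnorm \<alpha> (\<lambda>f z. T f z + - T f z) = 0"
    by (simp add: bloch_opnorm_def)
  with assms show "0 \<in> {bloch_opnorm \<alpha> (\<lambda>f z. T f z + K f z) | K. bloch_compact \<alpha> K}"
    by (intro CollectI exI[of _ "\<lambda>f z. - T f z"]) simp
next
  fix x assume "x \<in> {bloch_opnorm \<alpha> (\<lambda>f z. T f z + K f z) | K. bloch_compact \<alpha> K}"
  then obtain K where K: "bloch_compact \<alpha> K" and x: "x = bloch_opnorm \<alpha> (\<lambda>f z. T f z + K f z)"
    by blast
  obtain C\<^sub>T
    where C\<^sub>T: "\<And>f. f \<in> bloch0 \<alpha> \<Longrightarrow> bloch_norm \<alpha> f \<le> 1 \<Longrightarrow> bloch_norm \<alpha> (\<lambda>z. - T f z) \<le> C\<^sub>T"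
    using bloch_compact_bounded[OF assms] by blast
  obtain C\<^sub>K where C\<^sub>K: "\<And>f. f \<in> bloch0 \<alpha> \<Longrightarrow> bloch_norm \<alpha> f \<le> 1 \<Longrightarrow> bloch_norm \<alpha> (K f) \<le> C\<^sub>K"
    using bloch_compact_bounded[OF K] by blast
  show "0 \<le> x"
    unfolding x
  proof (rule bloch_opnorm_nonneg)
    fix f assume f: "f \<in> bloch0 \<alpha>" "bloch_norm \<alpha> f \<le> 1"
    have "(\<lambda>z. - T f z) \<in> bloch \<alpha>" "K f \<in> bloch \<alpha>"
      using assms K f by (auto simp: bloch_compact_def bloch_linear_def bloch0_eq)
    then have "bloch_norm \<alpha> (\<lambda>z. T f z + K f z) \<le> bloch_norm \<alpha> (\<lambda>z. - T f z) + bloch_norm \<alpha> (K f)"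
      using bloch_uminus[of "\<lambda>z. - T f z"] bloch_norm_add_le[of "T f" \<alpha> "K f"] by simp
    also have "\<dots> \<le> C\<^sub>T + C\<^sub>K"
      using C\<^sub>T[OF f] C\<^sub>K[OF f] by simp
    finally show "bloch_norm \<alpha> (\<lambda>z. T f z + K f z) \<le> C\<^sub>T + C\<^sub>K" .
  next
    fix z :: complex assume "z \<in> ball 0 1"
    with assms K show "T (\<lambda>w. 0) z + K (\<lambda>w. 0) z = 0"
      using bloch_linear_zero[of \<alpha> "\<lambda>f z. - T f z"] bloch_linear_zero[of \<alpha> K]
      by (auto simp: bloch_compact_def)
  qed
qed

section \<open>Growth of \<open>\<alpha>\<close>-Bloch functions for \<open>\<alpha> < 1\<close>\<close>

lemma powr_add_le:
  fixes a b s :: real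
  assumes "0 \<le> a" "0 \<le> b" "0 < s" "s \<le> 1"
  shows "(a + b) powr s \<le> a powr s + b powr s"
proof (cases "a + b = 0")
  case False
  then have ab: "0 < a + b"
    using assms by simp
  have le_powr: "x \<le> x powr s" if "0 \<le> x" "x \<le> 1" for x :: real
    using that assms powr_mono'[of s 1 x] by (cases "x = 0") auto
  have "1 = a / (a + b) + b / (a + b)"
    using ab by (simp flip: add_divide_distrib)
  also have "\<dots> \<le> (a / (a + b)) powr s + (b / (a + b)) powr s"
    using assms ab by (intro add_mono le_powr) simp_all
  also have "\<dots> = (a powr s + b powr s) / (a + b) powr s"
    using assms by (simp add: powr_divide add_divide_distrib)
  finally show ?thesis
    using ab by (simp add: le_divide_eq)
qed (use assms in simp)

lemma has_integral_radial_majorant: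
  fixes a r s B :: real
  assumes "0 \<le> a" "a \<le> 1" "0 \<le> r" "r < 1" "s \<noteq> 0"
  shows "((\<lambda>t. B * (1 - a) * r * (1 - (a + t * (1 - a)) * r) powr (s - 1)) has_integral
           B * ((1 - a * r) powr s - (1 - r) powr s) / s) {0..1}"
proof -
  define F where "F t = - B / s * (1 - (a + t * (1 - a)) * r) powr s" for t
  have pos: "0 < 1 - (a + t * (1 - a)) * r" if "t \<in> {0..1}" for t
  proof -
    have "a + t * (1 - a) \<le> 1" "0 \<le> a + t * (1 - a)"
      using that assms mult_left_le_one_le[of "1 - a" t] by auto
    then have "(a + t * (1 - a)) * r \<le> r"
      using assms by (simp add: mult_left_le_one_le)
    then show ?thesis
      using assms by linarith
  qed
  have "(F has_real_derivative B * (1 - a) * r * (1 - (a + t * (1 - a)) * r) powr (s - 1)) (at t)"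
    if "t \<in> {0..1}" for t
  proof -
    have "((\<lambda>t. 1 - (a + t * (1 - a)) * r) has_real_derivative - ((1 - a) * r)) (at t)"
      by (auto intro!: derivative_eq_intros)
    from DERIV_cmult[OF DERIV_fun_powr[where r=s, OF this pos[OF that]], of "- B / s"]
    show ?thesis
      unfolding F_def by (rule DERIV_cong) (use assms in \<open>simp add: field_simps\<close>)
  qed
  then have "((\<lambda>t. B * (1 - a) * r * (1 - (a + t * (1 - a)) * r) powr (s - 1)) has_integral F 1 - F 0) {0..1}"
    by (intro fundamental_theorem_of_calculus)
       (auto simp: has_real_derivative_iff_has_vector_derivative intro: has_vector_derivative_at_within)
  moreover have "F 1 - F 0 = B * ((1 - a * r) powr s - (1 - r) powr s) / s"
    by (simp add: F_def diff_divide_distrib right_diff_distrib)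
  ultimately show ?thesis
    by simp
qed

lemma segment_subset_ball: "a \<in> ball (0::complex) 1 \<Longrightarrow> b \<in> ball 0 1 \<Longrightarrow> closed_segment a b \<subseteq> ball 0 1"
  using convex_ball[of "0::complex" 1] by (simp add: convex_contains_segment)

lemma of_real_mult_in_ball:
  assumes "z \<in> ball (0::complex) 1" "0 \<le> u" "u \<le> 1"
  shows "of_real u * z \<in> ball 0 1" and "cmod (of_real u * z) = u * cmod z"
  using assms mult_left_le_one_le[of "cmod z" u] by (auto simp: norm_mult)

lemma bloch_radial_estimate:
  assumes hol: "f holomorphic_on ball 0 1"
    and bound: "\<And>w. w \<in> ball 0 1 \<Longrightarrow> (1 - (cmod w)\<^sup>2) powr \<alpha> * cmod (deriv f w) \<le> B"
    and \<alpha>: "0 \<le> \<alpha>" "\<alpha> \<noteq> 1" and z: "z \<in> ball 0 1" and a: "0 \<le> a" "a \<le> 1"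
  shows "cmod (f z - f (of_real a * z))
           \<le> B * ((1 - a * cmod z) powr (1 - \<alpha>) - (1 - cmod z) powr (1 - \<alpha>)) / (1 - \<alpha>)"
proof -
  define r where "r = cmod z"
  have r: "0 \<le> r" "r < 1"
    using z by (auto simp: r_def)
  have deriv_bound: "cmod (deriv f (of_real u * z)) \<le> B * (1 - u * r) powr (- \<alpha>)"
    if u: "0 \<le> u" "u \<le> 1" for u
  proof -
    have ur: "0 \<le> u * r" "u * r < 1"
      using u r mult_left_le_one_le[of r u] by auto
    have "(1 - u * r) powr \<alpha> \<le> (1 - (u * r)\<^sup>2) powr \<alpha>"
      using ur \<alpha> mult_left_le_one_le[of "u * r" "u * r"] by (intro powr_mono2) (auto simp: power2_eq_square)
    then have "(1 - u * r) powr \<alpha> * cmod (deriv f (of_real u * z))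
        \<le> (1 - (u * r)\<^sup>2) powr \<alpha> * cmod (deriv f (of_real u * z))"
      by (rule mult_right_mono) simp
    also have "\<dots> \<le> B"
      using bound[OF of_real_mult_in_ball(1)[OF z u]] of_real_mult_in_ball(2)[OF z u] by (simp add: r_def)
    finally show ?thesis
      using ur
      by (simp add: powr_minus_divide field_simps)
  qed
  have "(deriv f has_contour_integral f z - f (of_real a * z)) (linepath (of_real a * z) z)"
    using contour_integral_primitive[where S="ball 0 1" and g="linepath (of_real a * z) z",
        OF holomorphic_derivI[OF hol open_ball]]
      segment_subset_ball[OF of_real_mult_in_ball(1)[OF z a] z]
    by simp
  moreover have "linepath (of_real a * z) z t = of_real (a + t * (1 - a)) * z" for t
    by (simp add: linepath_def scaleR_conv_of_real algebra_simps)
  moreover have "z - of_real a * z = of_real (1 - a) * z"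
    by (simp add: algebra_simps)
  ultimately have integral: "((\<lambda>t. deriv f (of_real (a + t * (1 - a)) * z) * (of_real (1 - a) * z))
      has_integral f z - f (of_real a * z)) {0..1}"
    by (simp only: has_contour_integral_linepath)
  have majorant: "((\<lambda>t. B * (1 - a) * r * (1 - (a + t * (1 - a)) * r) powr ((1 - \<alpha>) - 1)) has_integral
      B * ((1 - a * r) powr (1 - \<alpha>) - (1 - r) powr (1 - \<alpha>)) / (1 - \<alpha>)) {0..1}"
    using a r \<alpha> by (intro has_integral_radial_majorant) auto
  have "cmod (deriv f (of_real (a + t * (1 - a)) * z) * (of_real (1 - a) * z))
      \<le> B * (1 - a) * r * (1 - (a + t * (1 - a)) * r) powr ((1 - \<alpha>) - 1)" if t: "t \<in> {0..1}" for t
  proof -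
    define u where "u = a + t * (1 - a)"
    have u: "0 \<le> u" "u \<le> 1"
      using t a mult_left_le_one_le[of "1 - a" t] by (auto simp: u_def)
    have "cmod (deriv f (of_real u * z) * (of_real (1 - a) * z))
        = cmod (deriv f (of_real u * z)) * ((1 - a) * r)"
      using a by (simp only: norm_mult norm_of_real r_def abs_of_nonneg diff_ge_0_iff_ge)
    also have "\<dots> \<le> B * (1 - u * r) powr (- \<alpha>) * ((1 - a) * r)"
      using a r by (intro mult_right_mono deriv_bound u) auto
    finally show ?thesis
      by (simp add: u_def mult_ac)
  qed
  from integral_norm_bound_integral[OF has_integral_integrable[OF integral]
      has_integral_integrable[OF majorant] this]
  show ?thesis
    using integral_unique[OF integral] integral_unique[OF majorant] by (simp add: r_def)
qed

lemma bloch_holder_estimate: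
  assumes hol: "f holomorphic_on ball 0 1"
    and bound: "\<And>w. w \<in> ball 0 1 \<Longrightarrow> (1 - (cmod w)\<^sup>2) powr \<alpha> * cmod (deriv f w) \<le> B"
    and \<alpha>: "0 \<le> \<alpha>" "\<alpha> < 1" and z: "z \<in> ball 0 1" and a: "0 \<le> a" "a \<le> 1"
  shows "cmod (f z - f (of_real a * z)) \<le> B * (1 - a) powr (1 - \<alpha>) / (1 - \<alpha>)"
proof -
  define r where "r = cmod z"
  have r: "0 \<le> r" "r \<le> 1"
    using z by (auto simp: r_def)
  have B: "0 \<le> B"
    using bound[of 0] by (simp add: order_trans[OF norm_ge_zero])
  have "(1 - a * r) powr (1 - \<alpha>) = ((1 - r) + r * (1 - a)) powr (1 - \<alpha>)"
    by (simp add: algebra_simps)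
  also have "\<dots> \<le> (1 - r) powr (1 - \<alpha>) + (r * (1 - a)) powr (1 - \<alpha>)"
    using r a \<alpha> by (intro powr_add_le) auto
  also have "(r * (1 - a)) powr (1 - \<alpha>) \<le> (1 - a) powr (1 - \<alpha>)"
    using r a \<alpha> mult_left_le_one_le[of "1 - a" r] by (intro powr_mono2) (auto simp: mult.commute)
  finally have "(1 - a * r) powr (1 - \<alpha>) - (1 - r) powr (1 - \<alpha>) \<le> (1 - a) powr (1 - \<alpha>)"
    by simp
  with B \<alpha> have "B * ((1 - a * r) powr (1 - \<alpha>) - (1 - r) powr (1 - \<alpha>)) / (1 - \<alpha>)
      \<le> B * (1 - a) powr (1 - \<alpha>) / (1 - \<alpha>)"
    by (intro divide_right_mono mult_left_mono) auto
  with bloch_radial_estimate[OF hol bound _ _ z a] \<alpha> show ?thesis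
    unfolding r_def by simp
qed

lemma tendsto_holder_modulus:
  fixes B \<alpha> :: real
  assumes "\<alpha> < 1"
  shows "((\<lambda>\<rho>::real. B * (1 - \<rho>) powr (1 - \<alpha>) / (1 - \<alpha>)) \<longlongrightarrow> 0) (at_left 1)"
proof -
  have "((\<lambda>\<rho>::real. (1 - \<rho>) powr (1 - \<alpha>)) \<longlongrightarrow> 0) (at_left 1)"
    using assms eventually_at_left_real[of 0 1]
    by (intro tendsto_zero_powrI tendsto_eq_intros) (auto elim: eventually_mono)
  from tendsto_mult_right_zero[OF tendsto_divide_zero[OF this, of "1 - \<alpha>"], of B]
  show ?thesis
    by simp
qed

definition diff_quotient_0 :: "(complex \<Rightarrow> complex) \<Rightarrow> complex \<Rightarrow> complex" where
  "diff_quotient_0 f z = (if z = 0 then deriv f 0 else (f z - f 0) / z)"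

lemma diff_quotient_0_holomorphic:
  assumes "f holomorphic_on S" "open S"
  shows "diff_quotient_0 f holomorphic_on S"
proof -
  have "diff_quotient_0 f = (\<lambda>z. if z = 0 then deriv f 0 else (f z - f 0) / (z - 0))"
    by (simp add: diff_quotient_0_def fun_eq_iff)
  with pole_lemma_open[OF assms] show ?thesis
    by simp
qed

lemma diff_quotient_0_diff:
  assumes "f field_differentiable at 0" "g field_differentiable at 0"
  shows "diff_quotient_0 (\<lambda>w. f w - g w) z = diff_quotient_0 f z - diff_quotient_0 g z"
  using assms by (simp add: diff_quotient_0_def deriv_diff diff_divide_distrib)

lemma diff_quotient_0_times_id:
  assumes "Q field_differentiable at 0"
  shows "diff_quotient_0 (\<lambda>w. w * Q w) z = Q z"
proof -
  have "((\<lambda>w. w * Q w) has_field_derivative Q 0) (at 0)"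
    using DERIV_mult[OF DERIV_ident assms[unfolded field_differentiable_def, THEN someI_ex]]
    by simp
  then show ?thesis
    by (simp add: diff_quotient_0_def DERIV_imp_deriv)
qed

lemma norm_diff_quotient_0_le:
  assumes hol: "f holomorphic_on ball 0 1"
    and bound: "\<And>w. w \<in> ball 0 1 \<Longrightarrow> (1 - (cmod w)\<^sup>2) powr \<alpha> * cmod (deriv f w) \<le> B"
    and \<alpha>: "0 \<le> \<alpha>" "\<alpha> < 1" and z: "z \<in> ball 0 1"
  shows "cmod (diff_quotient_0 f z) \<le> B / (1 - \<alpha>)"
proof -
  have B0: "0 \<le> B"
    using bound[of 0] by (simp add: order_trans[OF norm_ge_zero])
  then have B: "B \<le> B / (1 - \<alpha>)"
    using \<alpha> mult_left_mono[of "1 - \<alpha>" 1 B] by (simp add: le_divide_eq)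
  show ?thesis
  proof (cases "z = 0")
    case True
    then show ?thesis
      using bound[of 0] B by (simp add: diff_quotient_0_def)
  next
    case False
    define r where "r = cmod z"
    have r: "0 < r" "r < 1"
      using z False by (auto simp: r_def)
    have "cmod (f z - f 0) \<le> B * (1 - (1 - r) powr (1 - \<alpha>)) / (1 - \<alpha>)"
      using bloch_radial_estimate[OF hol bound _ _ z, of 0] \<alpha> by (simp add: r_def)
    also have "\<dots> \<le> B * r / (1 - \<alpha>)"
      using powr_mono'[of "1 - \<alpha>" 1 "1 - r"] r \<alpha> B0
      by (intro divide_right_mono mult_left_mono) auto
    finally show ?thesis
      using r False by (simp add: diff_quotient_0_def norm_divide r_def field_simps)
  qed
qed

section \<open>Uniform convergence on the whole disc\<close>

lemma uniform_limit_ball_radial_tails: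
  fixes fs :: "nat \<Rightarrow> complex \<Rightarrow> 'a::real_normed_vector"
  assumes local: "\<And>\<rho>. \<rho> < 1 \<Longrightarrow> uniform_limit (cball 0 \<rho>) fs F sequentially"
    and tails: "\<And>n z \<rho>. z \<in> ball 0 1 \<Longrightarrow> 0 < \<rho> \<Longrightarrow> \<rho> < 1 \<Longrightarrow> norm (fs n z - fs n (of_real \<rho> * z)) \<le> h \<rho>"
    and h: "(h \<longlongrightarrow> 0) (at_left 1)"
  shows "uniform_limit (ball 0 1) fs F sequentially"
proof (rule uniform_limitI)
  fix e :: real assume e: "0 < e"
  have "eventually (\<lambda>\<rho>. h \<rho> < e / 3 \<and> \<rho> \<in> {0<..<1}) (at_left (1::real))"
    using e by (intro eventually_conj order_tendstoD(2)[OF h] eventually_at_left_real) auto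
  then have "\<exists>\<rho>. h \<rho> < e / 3 \<and> \<rho> \<in> {0<..<1}"
    by (rule eventually_happens'[OF trivial_limit_at_left_real])
  then obtain \<rho> where \<rho>: "0 < \<rho>" "\<rho> < 1" "h \<rho> < e / 3"
    by auto
  have pointwise: "(\<lambda>n. fs n z) \<longlonglongrightarrow> F z" if "z \<in> ball 0 1" for z
    using that by (intro tendsto_uniform_limitI[OF local[of "cmod z"]]) auto
  have tail_F: "norm (F z - F (of_real \<rho> * z)) \<le> h \<rho>" if z: "z \<in> ball 0 1" for z
  proof (rule Lim_norm_ubound[OF trivial_limit_sequentially])
    show "(\<lambda>n. fs n z - fs n (of_real \<rho> * z)) \<longlonglongrightarrow> F z - F (of_real \<rho> * z)"
      using z \<rho> of_real_mult_in_ball(1)[OF z] by (intro tendsto_diff pointwise) auto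
  qed (use tails[OF z \<rho>(1,2)] in auto)
  have "eventually (\<lambda>n. \<forall>x\<in>cball 0 \<rho>. dist (fs n x) (F x) < e / 3) sequentially"
    using uniform_limitD[OF local[OF \<rho>(2)], of "e / 3"] e by simp
  then show "eventually (\<lambda>n. \<forall>z\<in>ball 0 1. dist (fs n z) (F z) < e) sequentially"
  proof (rule eventually_mono, intro ballI)
    fix n and z :: complex assume near: "\<forall>x\<in>cball 0 \<rho>. dist (fs n x) (F x) < e / 3" and z: "z \<in> ball 0 1"
    have "of_real \<rho> * z \<in> cball 0 \<rho>"
      using z \<rho> mult_left_le_one_le[of \<rho> "cmod z"] by (auto simp: norm_mult mult.commute)
    then have "norm (fs n (of_real \<rho> * z) - F (of_real \<rho> * z)) < e / 3"
      using near by (simp add: dist_norm)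
    moreover have "dist (fs n z) (F z) \<le> dist (fs n z) (fs n (of_real \<rho> * z)) + dist (fs n (of_real \<rho> * z)) (F z)"
      and "dist (fs n (of_real \<rho> * z)) (F z)
        \<le> dist (fs n (of_real \<rho> * z)) (F (of_real \<rho> * z)) + dist (F (of_real \<rho> * z)) (F z)"
      by (rule dist_triangle)+
    ultimately show "dist (fs n z) (F z) < e"
      using tails[OF z \<rho>(1,2), of n] tail_F[OF z] \<rho>(3)
      by (simp add: dist_norm norm_minus_commute)
  qed
qed

lemma uniform_limit_mult_left_bounded:
  fixes G :: "'a \<Rightarrow> 'b \<Rightarrow> 'c::real_normed_algebra"
  assumes lim: "uniform_limit S G Q F" and bound: "\<And>z. z \<in> S \<Longrightarrow> norm (c z) \<le> K"
  shows "uniform_limit S (\<lambda>n z. c z * G n z) (\<lambda>z. c z * Q z) F"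
proof (rule uniform_limitI)
  fix e :: real assume "0 < e"
  define K' where "K' = max K 1"
  have K': "0 < K'" "\<And>z. z \<in> S \<Longrightarrow> norm (c z) \<le> K'"
    using bound by (auto simp: K'_def intro: le_max_iff_disj[THEN iffD2])
  from \<open>0 < e\<close> have "eventually (\<lambda>n. \<forall>z\<in>S. dist (G n z) (Q z) < e / K') F"
    using K'(1) by (intro uniform_limitD[OF lim]) simp
  then show "eventually (\<lambda>n. \<forall>z\<in>S. dist (c z * G n z) (c z * Q z) < e) F"
  proof (rule eventually_mono, intro ballI)
    fix n z assume near: "\<forall>z\<in>S. dist (G n z) (Q z) < e / K'" and z: "z \<in> S"
    have "dist (c z * G n z) (c z * Q z) \<le> norm (c z) * dist (G n z) (Q z)"
      by (simp add: dist_norm norm_mult_ineq flip: right_diff_distrib)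
    also have "\<dots> \<le> K' * dist (G n z) (Q z)"
      using K'(2)[OF z] by (rule mult_right_mono) simp
    also have "\<dots> < e"
      using near z K'(1) by (simp add: field_simps)
    finally show "dist (c z * G n z) (c z * Q z) < e" .
  qed
qed

lemma uniform_limit_diff_quotient_0:
  fixes fs :: "nat \<Rightarrow> complex \<Rightarrow> complex"
  assumes local: "\<And>\<rho>. \<rho> < 1 \<Longrightarrow> uniform_limit (cball 0 \<rho>) (\<lambda>n. diff_quotient_0 (fs n)) Q sequentially"
    and zero: "\<And>n. fs n 0 = 0"
    and tails: "\<And>n z \<rho>. z \<in> ball 0 1 \<Longrightarrow> 0 < \<rho> \<Longrightarrow> \<rho> < 1 \<Longrightarrow> cmod (fs n z - fs n (of_real \<rho> * z)) \<le> h \<rho>"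
    and h: "(h \<longlongrightarrow> 0) (at_left 1)"
  shows "uniform_limit (ball 0 1) (\<lambda>n. diff_quotient_0 (fs n)) Q sequentially"
proof -
  let ?A = "{z \<in> ball 0 1. 1/2 \<le> cmod z}"
  have fs_eq: "fs = (\<lambda>n z. z * diff_quotient_0 (fs n) z)"
    using zero by (simp add: fun_eq_iff diff_quotient_0_def)
  have "uniform_limit (cball 0 \<rho>) fs (\<lambda>z. z * Q z) sequentially" if "\<rho> < 1" for \<rho>
    using uniform_limit_mult_left_bounded[OF local[OF that], of id 1] that
    by (subst fs_eq) simp
  then have "uniform_limit (ball 0 1) fs (\<lambda>z. z * Q z) sequentially"
    using tails h by (rule uniform_limit_ball_radial_tails)
  then have "uniform_limit ?A fs (\<lambda>z. z * Q z) sequentially"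
    by (rule uniform_limit_on_subset) auto
  then have "uniform_limit ?A (\<lambda>n z. inverse z * fs n z) (\<lambda>z. inverse z * (z * Q z)) sequentially"
    by (rule uniform_limit_mult_left_bounded[where K=2]) (auto simp: inverse_eq_divide norm_divide divide_le_eq)
  then have "uniform_limit ?A (\<lambda>n. diff_quotient_0 (fs n)) Q sequentially"
  proof (rule uniform_limit_cong'[THEN iffD1, rotated 2])
    show "inverse z * fs n z = diff_quotient_0 (fs n) z" if "z \<in> ?A" for n z
      using that zero by (auto simp: diff_quotient_0_def field_simps)
    show "inverse z * (z * Q z) = Q z" if "z \<in> ?A" for z
      using that by (cases "z = 0") auto
  qed
  then have "uniform_limit (cball 0 (1/2) \<union> ?A) (\<lambda>n. diff_quotient_0 (fs n)) Q sequentially"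
    using local[of "1/2"] by (intro uniform_limit_on_Un) auto
  then show ?thesis
    by (rule uniform_limit_on_subset) auto
qed

lemma Montel_diff_quotient_0:
  fixes fs :: "nat \<Rightarrow> complex \<Rightarrow> complex"
  assumes hol: "\<And>n. fs n holomorphic_on ball 0 1"
    and bound: "\<And>n z. z \<in> ball 0 1 \<Longrightarrow> cmod (diff_quotient_0 (fs n) z) \<le> M"
  obtains Q r where "Q holomorphic_on ball 0 1" "strict_mono r"
    "\<And>z. z \<in> ball 0 1 \<Longrightarrow> cmod (Q z) \<le> M"
    "\<And>\<rho>. \<rho> < 1 \<Longrightarrow> uniform_limit (cball 0 \<rho>) (\<lambda>n. diff_quotient_0 (fs (r n))) Q sequentially"
proof -
  let ?\<H> = "{h. h holomorphic_on ball 0 1 \<and> (\<forall>z\<in>ball 0 1. cmod (h z) \<le> M)}"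
  have "\<And>h. h \<in> ?\<H> \<Longrightarrow> h holomorphic_on ball 0 1"
    and "\<And>K. compact K \<Longrightarrow> K \<subseteq> ball 0 1 \<Longrightarrow> \<exists>B. \<forall>h\<in>?\<H>. \<forall>z\<in>K. cmod (h z) \<le> B"
    and "range (\<lambda>n. diff_quotient_0 (fs n)) \<subseteq> ?\<H>"
    using bound hol by (auto intro: diff_quotient_0_holomorphic)
  from Montel[OF open_ball this] obtain Q r where Q: "Q holomorphic_on ball 0 1" and r: "strict_mono r"
    and pointwise: "\<And>z. z \<in> ball 0 1 \<Longrightarrow> (\<lambda>n. diff_quotient_0 (fs (r n)) z) \<longlonglongrightarrow> Q z"
    and local: "\<And>K. compact K \<Longrightarrow> K \<subseteq> ball 0 1 \<Longrightarrow>
                  uniform_limit K ((\<lambda>n. diff_quotient_0 (fs n)) \<circ> r) Q sequentially"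
    by blast
  show ?thesis
  proof (rule that[OF Q r])
    show "cmod (Q z) \<le> M" if "z \<in> ball 0 1" for z
      using that bound by (intro Lim_norm_ubound[OF trivial_limit_sequentially pointwise]) auto
    show "uniform_limit (cball 0 \<rho>) (\<lambda>n. diff_quotient_0 (fs (r n))) Q sequentially" if "\<rho> < 1" for \<rho>
      using local[of "cball 0 \<rho>"] that by (simp add: o_def subset_iff)
  qed
qed

section \<open>The Cesaro operator\<close>

lemma one_minus_notin_nonpos_Reals: "z \<in> ball (0::complex) 1 \<Longrightarrow> 1 - z \<notin> \<real>\<^sub>\<le>\<^sub>0"
  using complex_Re_le_cmod[of z] by (auto simp: complex_nonpos_Reals_iff)

lemma holomorphic_on_one_minus_powr: "(\<lambda>w. (1 - w) powr c) holomorphic_on ball 0 1"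
  using one_minus_notin_nonpos_Reals by (intro holomorphic_intros) auto

lemma cesaro_integrand_holomorphic:
  assumes "f holomorphic_on ball 0 1"
  shows "(\<lambda>w. diff_quotient_0 f w / (1 - w) powr c) holomorphic_on ball 0 1"
  using assms by (intro holomorphic_on_divide diff_quotient_0_holomorphic holomorphic_on_one_minus_powr)
    auto

lemma has_field_derivative_contour_integral_linepath:
  assumes hol: "f holomorphic_on S" and S: "open S" "convex S" and "a \<in> S" "x \<in> S"
  shows "((\<lambda>x. contour_integral (linepath a x) f) has_field_derivative f x) (at x)"
proof -
  have "((\<lambda>x. contour_integral (linepath a x) f) has_field_derivative f x) (at x within S)"
  proof (rule triangle_contour_integrals_convex_primitive)
    show "continuous_on S f"
      using hol by (rule holomorphic_on_imp_continuous_on)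
    fix b c assume "b \<in> S" "c \<in> S"
    with \<open>a \<in> S\<close> S have "path_image (linepath a b +++ linepath b c +++ linepath c a) \<subseteq> S"
      by (auto simp: path_image_join convex_contains_segment)
    with hol S have "(f has_contour_integral 0) (linepath a b +++ linepath b c +++ linepath c a)"
      by (intro Cauchy_theorem_convex_simple) auto
    then show "contour_integral (linepath a b) f + contour_integral (linepath b c) f
        + contour_integral (linepath c a) f = 0"
      by (rule has_chain_integral_chain_integral3)
  qed (use assms in simp_all)
  with assms show ?thesis
    by (metis at_within_open)
qed

lemma cesaro_has_contour_integral:
  assumes hol: "f holomorphic_on ball 0 1" and zero: "f 0 = 0" and z: "z \<in> ball 0 1"
  shows "((\<lambda>w. f w / (w * (1 - w) powr complex_of_real b)) has_contour_integral
           contour_integral (linepath 0 z) (\<lambda>w. diff_quotient_0 f w / (1 - w) powr complex_of_real b))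
         (linepath 0 z)"
proof -
  let ?g = "\<lambda>w. diff_quotient_0 f w / (1 - w) powr complex_of_real b"
  from hol have "?g contour_integrable_on linepath 0 z"
    using z segment_subset_ball[of 0 z]
    by (intro contour_integrable_continuous_linepath holomorphic_on_imp_continuous_on
        cesaro_integrand_holomorphic[THEN holomorphic_on_subset]) auto
  then have "(?g has_contour_integral contour_integral (linepath 0 z) ?g) (linepath 0 z)"
    by (rule has_contour_integral_integral)
  then have "((\<lambda>t. ?g (linepath 0 z t) * (z - 0)) has_integral contour_integral (linepath 0 z) ?g) {0..1}"
    by (simp only: has_contour_integral_linepath)
  then show ?thesis
    unfolding has_contour_integral_linepath
  proof (rule has_integral_spike[OF negligible_sing[of 0], rotated])
    fix t :: real assume "t \<in> {0..1} - {0}"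
    then have "z \<noteq> 0 \<Longrightarrow> linepath 0 z t \<noteq> 0"
      by (auto simp: linepath_def)
    with zero show "f (linepath 0 z t) / (linepath 0 z t * (1 - linepath 0 z t) powr complex_of_real b)
        * (z - 0) = ?g (linepath 0 z t) * (z - 0)"
      by (cases "z = 0") (simp_all add: diff_quotient_0_def)
  qed
qed

lemma cesaro_eq_contour_integral:
  assumes "f holomorphic_on ball 0 1" "f 0 = 0" "z \<in> ball 0 1"
  shows "cesaro b f z = contour_integral (linepath 0 z) (\<lambda>w. diff_quotient_0 f w / (1 - w) powr complex_of_real b)"
  unfolding cesaro_def using cesaro_has_contour_integral[OF assms] by (rule contour_integral_unique)

lemma cesaro_contour_integrable:
  assumes "f holomorphic_on ball 0 1" "f 0 = 0" "z \<in> ball 0 1"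
  shows "(\<lambda>w. f w / (w * (1 - w) powr complex_of_real b)) contour_integrable_on linepath 0 z"
  using cesaro_has_contour_integral[OF assms] by (auto simp: contour_integrable_on_def)

lemma cesaro_has_field_derivative:
  assumes hol: "f holomorphic_on ball 0 1" and zero: "f 0 = 0" and z: "z \<in> ball 0 1"
  shows "(cesaro b f has_field_derivative diff_quotient_0 f z / (1 - z) powr complex_of_real b) (at z)"
proof -
  from has_field_derivative_contour_integral_linepath[OF cesaro_integrand_holomorphic[OF hol] _ _ _ z]
  show ?thesis
    by (rule has_field_derivative_transform_within_open[where S="ball 0 1"])
       (use assms cesaro_eq_contour_integral in auto)
qed

lemma cesaro_holomorphic:
  assumes "f holomorphic_on ball 0 1" "f 0 = 0"
  shows "cesaro b f holomorphic_on ball 0 1"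
  using cesaro_has_field_derivative[OF assms] by (subst holomorphic_on_open) blast+

lemma cesaro_at_0 [simp]: "cesaro b f 0 = 0"
  by (simp add: cesaro_def)

lemma cesaro_add:
  assumes "f holomorphic_on ball 0 1" "f 0 = 0" "g holomorphic_on ball 0 1" "g 0 = 0" "z \<in> ball 0 1"
  shows "cesaro b (\<lambda>w. f w + g w) z = cesaro b f z + cesaro b g z"
  unfolding cesaro_def add_divide_distrib
  using assms by (intro contour_integral_add cesaro_contour_integrable)

lemma cesaro_diff:
  assumes "f holomorphic_on ball 0 1" "f 0 = 0" "g holomorphic_on ball 0 1" "g 0 = 0" "z \<in> ball 0 1"
  shows "cesaro b (\<lambda>w. f w - g w) z = cesaro b f z - cesaro b g z"
  unfolding cesaro_def diff_divide_distrib
  using assms by (intro contour_integral_diff cesaro_contour_integrable)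

lemma cesaro_cmult:
  assumes "f holomorphic_on ball 0 1" "f 0 = 0" "z \<in> ball 0 1"
  shows "cesaro b (\<lambda>w. c * f w) z = c * cesaro b f z"
  unfolding cesaro_def times_divide_eq_right[symmetric]
  using assms by (intro contour_integral_lmul cesaro_contour_integrable)

lemma bloch_weight_div_one_minus_powr_le:
  assumes z: "z \<in> ball (0::complex) 1" and \<alpha>: "0 \<le> \<alpha>" "\<alpha> \<le> 1"
  shows "(1 - (cmod z)\<^sup>2) powr \<alpha> * cmod (c / (1 - z) powr complex_of_real \<alpha>) \<le> 2 * cmod c"
proof -
  have "1 - (cmod z)\<^sup>2 = (1 - cmod z) * (1 + cmod z)"
    by (simp add: power2_eq_square algebra_simps)
  also have "\<dots> \<le> cmod (1 - z) * 2"
    using z norm_triangle_ineq2[of 1 z] by (intro mult_mono) auto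
  finally have "(1 - (cmod z)\<^sup>2) powr \<alpha> \<le> (2 * cmod (1 - z)) powr \<alpha>"
    using z \<alpha> by (intro powr_mono2) (auto simp: abs_square_le_1 mult.commute)
  also have "\<dots> = 2 powr \<alpha> * cmod (1 - z) powr \<alpha>"
    by (simp add: powr_mult)
  also have "\<dots> \<le> 2 * cmod (1 - z) powr \<alpha>"
    using powr_mono[of \<alpha> 1 2] \<alpha> by (intro mult_right_mono) auto
  finally have weight: "(1 - (cmod z)\<^sup>2) powr \<alpha> / cmod (1 - z) powr \<alpha> \<le> 2"
    using z by (simp add: divide_le_eq)
  have "(1 - (cmod z)\<^sup>2) powr \<alpha> * cmod (c / (1 - z) powr complex_of_real \<alpha>)
      = (1 - (cmod z)\<^sup>2) powr \<alpha> / cmod (1 - z) powr \<alpha> * cmod c"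
    by (simp add: norm_divide norm_powr_real_powr')
  also have "\<dots> \<le> 2 * cmod c"
    using weight by (rule mult_right_mono) simp
  finally show ?thesis .
qed

lemma weighted_deriv_cesaro_le:
  assumes "f holomorphic_on ball 0 1" "f 0 = 0" "z \<in> ball 0 1" "0 \<le> \<alpha>" "\<alpha> \<le> 1"
  shows "(1 - (cmod z)\<^sup>2) powr \<alpha> * cmod (deriv (cesaro \<alpha> f) z) \<le> 2 * cmod (diff_quotient_0 f z)"
  using DERIV_imp_deriv[OF cesaro_has_field_derivative[OF assms(1-3)]]
    bloch_weight_div_one_minus_powr_le[OF assms(3-5)]
  by simp

lemma cesaro_in_bloch0:
  assumes hol: "f holomorphic_on ball 0 1" and zero: "f 0 = 0" and \<alpha>: "0 \<le> \<alpha>" "\<alpha> \<le> 1"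
    and bound: "\<And>z. z \<in> ball 0 1 \<Longrightarrow> cmod (diff_quotient_0 f z) \<le> M"
  shows "cesaro \<alpha> f \<in> bloch0 \<alpha>" and "bloch_norm \<alpha> (cesaro \<alpha> f) \<le> 2 * M"
proof -
  have weighted: "(1 - (cmod z)\<^sup>2) powr \<alpha> * cmod (deriv (cesaro \<alpha> f) z) \<le> 2 * M" if "z \<in> ball 0 1" for z
    using weighted_deriv_cesaro_le[OF hol zero that \<alpha>] bound[OF that] by simp
  show "cesaro \<alpha> f \<in> bloch0 \<alpha>"
    unfolding bloch0_eq using cesaro_holomorphic[OF hol zero] weighted by (auto intro: blochI[where B="2 * M"])
  show "bloch_norm \<alpha> (cesaro \<alpha> f) \<le> 2 * M"
    using weighted by (rule bloch_norm_least)
qed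

lemma bloch_linear_cesaro:
  assumes "0 \<le> \<alpha>" "\<alpha> < 1"
  shows "bloch_linear \<alpha> (cesaro \<alpha>)"
  unfolding bloch_linear_def
proof (intro conjI ballI allI)
  fix f assume "f \<in> bloch0 \<alpha>"
  then have f: "f \<in> bloch \<alpha>" "f 0 = 0"
    by (simp_all add: bloch0_eq)
  with assms show "cesaro \<alpha> f \<in> bloch0 \<alpha>"
    by (intro cesaro_in_bloch0(1)[where M="bloch_norm \<alpha> f / (1 - \<alpha>)"] norm_diff_quotient_0_le
        bloch_norm_upper bloch_holomorphic) auto
  fix g z c assume "g \<in> bloch0 \<alpha>" "z \<in> ball (0::complex) 1"
  with f show "cesaro \<alpha> (\<lambda>w. f w + g w) z = cesaro \<alpha> f z + cesaro \<alpha> g z"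
    by (intro cesaro_add) (auto simp: bloch0_eq bloch_holomorphic)
next
  fix f z c assume "f \<in> bloch0 \<alpha>" "z \<in> ball (0::complex) 1"
  then show "cesaro \<alpha> (\<lambda>w. c * f w) z = c * cesaro \<alpha> f z"
    by (intro cesaro_cmult) (auto simp: bloch0_eq bloch_holomorphic)
qed

lemma tendsto_bloch_norm_cesaro_diff:
  assumes hol: "\<And>n. fs n holomorphic_on ball 0 1" "F holomorphic_on ball 0 1"
    and zero: "\<And>n. fs n 0 = 0" "F 0 = 0" and \<alpha>: "0 \<le> \<alpha>" "\<alpha> \<le> 1"
    and lim: "uniform_limit (ball 0 1) (\<lambda>n. diff_quotient_0 (fs n)) (diff_quotient_0 F) sequentially"
  shows "(\<lambda>n. bloch_norm \<alpha> (\<lambda>z. cesaro \<alpha> (fs n) z - cesaro \<alpha> F z)) \<longlonglongrightarrow> 0"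
proof (rule tendstoI)
  fix e :: real assume "0 < e"
  with lim have "eventually (\<lambda>n. \<forall>z\<in>ball 0 1. dist (diff_quotient_0 (fs n) z) (diff_quotient_0 F z) < e / 4)
      sequentially"
    by (intro uniform_limitD) auto
  then show "eventually (\<lambda>n. dist (bloch_norm \<alpha> (\<lambda>z. cesaro \<alpha> (fs n) z - cesaro \<alpha> F z)) 0 < e) sequentially"
  proof (rule eventually_mono)
    fix n assume near: "\<forall>z\<in>ball 0 1. dist (diff_quotient_0 (fs n) z) (diff_quotient_0 F z) < e / 4"
    define g where "g = (\<lambda>w. fs n w - F w)"
    have hol_g: "g holomorphic_on ball 0 1" and zero_g: "g 0 = 0"
      using hol zero by (auto simp: g_def intro!: holomorphic_intros)
    have "cmod (diff_quotient_0 g z) \<le> e / 4" if "z \<in> ball 0 1" for z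
    proof -
      have "fs n field_differentiable at 0" "F field_differentiable at 0"
        using hol by (auto intro!: holomorphic_on_imp_differentiable_at)
      with near[rule_format, OF that] show ?thesis
        unfolding g_def by (simp add: diff_quotient_0_diff dist_norm)
    qed
    note g_bloch = cesaro_in_bloch0[OF hol_g zero_g \<alpha> this]
    have "bloch_norm \<alpha> (\<lambda>z. cesaro \<alpha> (fs n) z - cesaro \<alpha> F z) = bloch_norm \<alpha> (cesaro \<alpha> g)"
      using hol zero by (intro bloch_norm_cong) (simp add: g_def cesaro_diff)
    moreover have "0 \<le> bloch_norm \<alpha> (cesaro \<alpha> g)"
      using g_bloch(1) by (intro bloch_norm_nonneg) (simp add: bloch0_eq)
    ultimately show "dist (bloch_norm \<alpha> (\<lambda>z. cesaro \<alpha> (fs n) z - cesaro \<alpha> F z)) 0 < e"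
      using g_bloch(2) \<open>0 < e\<close> by (simp add: dist_norm)
  qed
qed

lemma bloch_compact_cesaro:
  assumes \<alpha>: "0 \<le> \<alpha>" "\<alpha> < 1"
  shows "bloch_compact \<alpha> (cesaro \<alpha>)"
  unfolding bloch_compact_def
proof (intro conjI allI impI bloch_linear_cesaro[OF \<alpha>])
  fix fs :: "nat \<Rightarrow> complex \<Rightarrow> complex" and B
  assume "\<forall>n. fs n \<in> bloch0 \<alpha> \<and> bloch_norm \<alpha> (fs n) \<le> B"
  then have fs: "\<And>n. fs n \<in> bloch \<alpha>" "\<And>n. fs n 0 = 0" "\<And>n. bloch_norm \<alpha> (fs n) \<le> B"
    by (simp_all add: bloch0_eq)
  have hol: "fs n holomorphic_on ball 0 1" for n
    using fs(1) by (rule bloch_holomorphic)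
  have bound: "(1 - (cmod w)\<^sup>2) powr \<alpha> * cmod (deriv (fs n) w) \<le> B" if "w \<in> ball 0 1" for n w
    using bloch_norm_upper[OF fs(1) that] fs(3) by (rule order_trans)
  define M where "M = B / (1 - \<alpha>)"
  have dq_bound: "cmod (diff_quotient_0 (fs n) z) \<le> M" if "z \<in> ball 0 1" for n z
    unfolding M_def using hol bound \<alpha> that by (rule norm_diff_quotient_0_le)
  obtain Q r where Q: "Q holomorphic_on ball 0 1" and r: "strict_mono r"
    and Q_bound: "\<And>z. z \<in> ball 0 1 \<Longrightarrow> cmod (Q z) \<le> M"
    and local: "\<And>\<rho>. \<rho> < 1 \<Longrightarrow> uniform_limit (cball 0 \<rho>) (\<lambda>n. diff_quotient_0 (fs (r n))) Q sequentially"
    using Montel_diff_quotient_0[of fs M] hol dq_bound by blast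
  define F where "F = (\<lambda>z. z * Q z)"
  have hol_F: "F holomorphic_on ball 0 1" and zero_F: "F 0 = 0"
    unfolding F_def using Q by (auto intro: holomorphic_intros)
  have dq_F: "diff_quotient_0 F = Q"
    unfolding F_def using Q by (intro ext diff_quotient_0_times_id holomorphic_on_imp_differentiable_at) auto
  have "uniform_limit (ball 0 1) (\<lambda>n. diff_quotient_0 (fs (r n))) (diff_quotient_0 F) sequentially"
  proof (unfold dq_F, rule uniform_limit_diff_quotient_0[OF local fs(2) _ tendsto_holder_modulus])
    show "cmod (fs (r n) z - fs (r n) (of_real \<rho> * z)) \<le> B * (1 - \<rho>) powr (1 - \<alpha>) / (1 - \<alpha>)"
      if "z \<in> ball 0 1" "0 < \<rho>" "\<rho> < 1" for n z \<rho>
      using hol bound \<alpha> that by (intro bloch_holder_estimate) auto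
  qed (use \<alpha> in auto)
  then have "(\<lambda>n. bloch_norm \<alpha> (\<lambda>z. cesaro \<alpha> (fs (r n)) z - cesaro \<alpha> F z)) \<longlonglongrightarrow> 0"
    using hol hol_F fs(2) zero_F \<alpha> by (intro tendsto_bloch_norm_cesaro_diff) auto
  moreover have "cesaro \<alpha> F \<in> bloch0 \<alpha>"
    using hol_F zero_F \<alpha> Q_bound by (intro cesaro_in_bloch0(1)[where M=M]) (auto simp: dq_F)
  ultimately show "\<exists>r g. strict_mono r \<and> g \<in> bloch0 \<alpha> \<and>
      (\<lambda>n. bloch_norm \<alpha> (\<lambda>z. cesaro \<alpha> (fs (r n)) z - g z)) \<longlonglongrightarrow> 0"
    using r by blast
qed

theorem theorem4p4:
  fixes \<alpha> \<beta> :: real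
  assumes "0 < \<alpha>" and "\<alpha> < 1" and "\<beta> = \<alpha>"
  shows "bloch_essnorm \<alpha> (cesaro \<beta>) = 0"
proof -
  have "bloch_compact \<alpha> (cesaro \<alpha>)"
    using assms by (intro bloch_compact_cesaro) auto
  then have "bloch_compact \<alpha> (\<lambda>f z. - cesaro \<alpha> f z)"
    by (rule bloch_compact_uminus)
  then show ?thesis
    unfolding \<open>\<beta> = \<alpha>\<close> by (rule bloch_essnorm_eq_0)
qed

end
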